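(* Let $G\le S_n$ be transitive and suppose $G$ contains two permutations $g_1,g_2$ whose i-types are disjoint. Then $G$ is primitive.
   Context: If $(m_1,\dots,m_l)$ is a partition of $m$, then $(km_1,\dots,km_l)$ is an ic-partition of type $(k,m)$. A clustering of a partition is a partition of its multiset of parts into sub-multisets (clusters). A partition of $km$ is an i-partition of type $(k,m)$ if it has a clustering $P_1,\dots,P_r$ and a partition $(k_1,\dots,k_r)$ of $k$ with each $P_i$ an ic-partition of type $(k_i,m)$. The i-type of a permutation $g\in S_n$ is the set of pairs $(k,m)$ with $k,m>1$, $km=n$, such that the cycle partition of $g$ (multiset of its cycle lengths) is an i-partition of type $(k,m)$. *)

theory Defs
  imports "HOL-Algebra.Sym_Groups" "HOL-Combinatorics.Orbits" "HOL-Library.Multiset"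
begin

definition is_partition :: "nat multiset \<Rightarrow> nat \<Rightarrow> bool" where
  "is_partition P m \<longleftrightarrow> 0 \<notin># P \<and> sum_mset P = m"

definition ic_partition :: "nat multiset \<Rightarrow> nat \<Rightarrow> nat \<Rightarrow> bool" where
  "ic_partition P k m \<longleftrightarrow> (\<exists>Q. is_partition Q m \<and> P = image_mset (\<lambda>x. k * x) Q)"

text \<open>i-partition of type (k,m): a partition P of k*m admitting a clustering P_1,...,P_r
  (nonempty sub-multisets whose multiset sum is P) and a partition (k_1,...,k_r) of k with each
  P_i an ic-partition of type (k_i,m). The pairs (k_i,P_i) are collected in the multiset C.\<close>
definition i_partition :: "nat multiset \<Rightarrow> nat \<Rightarrow> nat \<Rightarrow> bool" where
  "i_partition P k m \<longleftrightarrow> is_partition P (k * m) \<and>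
     (\<exists>C :: (nat \<times> nat multiset) multiset.
        (\<forall>c \<in># C. snd c \<noteq> {#}) \<and>
        sum_mset (image_mset snd C) = P \<and>
        is_partition (image_mset fst C) k \<and>
        (\<forall>c \<in># C. ic_partition (snd c) (fst c) m))"

text \<open>Cycle partition of g \<in> S_n (acting on {1..n}): multiset of the lengths of its cycles
  (including fixed points as cycles of length 1).\<close>
definition cycle_partition :: "nat \<Rightarrow> (nat \<Rightarrow> nat) \<Rightarrow> nat multiset" where
  "cycle_partition n g = image_mset card (mset_set {Orbits.orbit g x | x. x \<in> {1..n}})"

definition i_type :: "nat \<Rightarrow> (nat \<Rightarrow> nat) \<Rightarrow> (nat \<times> nat) set" where
  "i_type n g = {(k, m). k > 1 \<and> m > 1 \<and> k * m = n \<and> i_partition (cycle_partition n g) k m}"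

definition transitive_perm_group :: "nat \<Rightarrow> (nat \<Rightarrow> nat) set \<Rightarrow> bool" where
  "transitive_perm_group n G \<longleftrightarrow> (\<forall>x\<in>{1..n}. \<forall>y\<in>{1..n}. \<exists>g\<in>G. g x = y)"

definition is_block :: "nat \<Rightarrow> (nat \<Rightarrow> nat) set \<Rightarrow> nat set \<Rightarrow> bool" where
  "is_block n G B \<longleftrightarrow> B \<noteq> {} \<and> B \<subseteq> {1..n} \<and> (\<forall>g\<in>G. g ` B = B \<or> g ` B \<inter> B = {})"

definition primitive_perm_group :: "nat \<Rightarrow> (nat \<Rightarrow> nat) set \<Rightarrow> bool" where
  "primitive_perm_group n G \<longleftrightarrow> transitive_perm_group n G \<and>
     (\<forall>B. is_block n G B \<longrightarrow> card B = 1 \<or> B = {1..n})"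

end

theory Submission
  imports Defs
begin

text \<open>A nontrivial block \<open>B\<close> of size \<open>m\<close> yields a system of \<open>k = n / m\<close> blocks
  (its translates), which every \<open>g \<in> G\<close> permutes. Group the blocks into orbits under
  \<open>g\<close>; if such an orbit has \<open>k\<^sub>i\<close> blocks, then every cycle of \<open>g\<close> running through
  these blocks visits them cyclically, so its length is divisible by \<open>k\<^sub>i\<close>, and these cycles
  cover exactly \<open>k\<^sub>i m\<close> points. Hence the cycles of \<open>g\<close> cluster into
  ic-partitions of types \<open>(k\<^sub>i, m)\<close> with \<open>\<Sum> k\<^sub>i = k\<close>, i.e. \<open>(k, m)\<close> lies in the
  i-type of every element of \<open>G\<close>, which two elements with disjoint i-types forbid.\<close>

lemma funpow_image:
  fixes f :: "'a \<Rightarrow> 'a"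
  shows "((`) f ^^ q) X = (f ^^ q) ` X"
  by (induction q) (simp_all add: image_comp)

lemma orbit_subset_of_image_subset:
  assumes "f ` A \<subseteq> A" "x \<in> A"
  shows "orbit f x \<subseteq> A"
proof
  fix y assume "y \<in> orbit f x"
  then show "y \<in> A" by induct (use assms in auto)
qed

lemma card_orbit_eq_funpow_dist1:
  assumes "x \<in> orbit f x"
  shows "card (orbit f x) = funpow_dist1 f x x"
  using orbit_conv_funpow_dist1[OF assms] inj_on_funpow_dist1[OF assms]
  by (simp add: card_image)

lemma funpow_card_orbit:
  assumes "x \<in> orbit f x"
  shows "(f ^^ card (orbit f x)) x = x"
  using funpow_dist1_prop[OF assms] card_orbit_eq_funpow_dist1[OF assms] by simp

lemma card_orbit_dvd:
  assumes "x \<in> orbit f x" "(f ^^ q) x = x" "0 < q"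
  shows "card (orbit f x) dvd q"
proof -
  let ?p = "funpow_dist1 f x x"
  have "(f ^^ (q mod ?p)) x = x"
    using funpow_mod_eq[OF funpow_dist1_prop[OF assms(1)]] assms(2) by simp
  then have "q mod ?p = 0"
    using funpow_dist1_least[of "q mod ?p" f x x] by fastforce
  then show ?thesis
    using card_orbit_eq_funpow_dist1[OF assms(1)] by auto
qed

text \<open>Orbits are treated for maps of finite order rather than for permutations, so that they
  also apply to the action \<open>(`) g\<close> of a permutation \<open>g\<close> on sets, which moves infinitely many
  sets but still satisfies \<open>((`) g) ^^ N = id\<close>.\<close>

lemma self_in_orbit_of_funpow_eq_id:
  assumes "f ^^ N = id" "0 < N"
  shows "x \<in> orbit f x"
  using assms unfolding orbit_altdef by (metis (mono_tags) id_apply mem_Collect_eq)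

lemma orbit_eq_of_funpow_eq_id:
  assumes "f ^^ N = id" "0 < N" "y \<in> orbit f x"
  shows "orbit f y = orbit f x"
proof -
  have "x \<in> orbit f y"
    using orbit_swap[OF self_in_orbit_of_funpow_eq_id[OF assms(1,2)] assms(3)] .
  then show ?thesis
    using orbit_trans[OF _ assms(3)] orbit_trans[of _ f x y] by blast
qed

lemma pairwise_disjnt_orbits:
  assumes "f ^^ N = id" "0 < N"
  shows "pairwise disjnt (orbit f ` A)"
  unfolding pairwise_def disjnt_def
  using orbit_eq_of_funpow_eq_id[OF assms] by blast

lemma Union_orbits:
  assumes "f ^^ N = id" "0 < N" "f ` A \<subseteq> A"
  shows "\<Union>(orbit f ` A) = A"
proof
  show "\<Union>(orbit f ` A) \<subseteq> A"
    using orbit_subset_of_image_subset[OF assms(3)] by blast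
  show "A \<subseteq> \<Union>(orbit f ` A)"
    using self_in_orbit_of_funpow_eq_id[OF assms(1,2)] by blast
qed

lemma sum_card_orbits:
  assumes "f ^^ N = id" "0 < N" "f ` A \<subseteq> A" "finite A"
  shows "(\<Sum>C\<in>orbit f ` A. card C) = card A"
proof -
  have "\<And>C. C \<in> orbit f ` A \<Longrightarrow> finite C"
    using finite_subset[OF orbit_subset_of_image_subset[OF assms(3)] assms(4)] by blast
  then have "card (\<Union>(orbit f ` A)) = (\<Sum>C\<in>orbit f ` A. card C)"
    by (intro card_Union_disjoint pairwise_disjnt_orbits[OF assms(1,2)])
  then show ?thesis
    using Union_orbits[OF assms(1-3)] by simp
qed

definition cycle_lengths :: "('a \<Rightarrow> 'a) \<Rightarrow> 'a set \<Rightarrow> nat multiset" where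
  "cycle_lengths f A = image_mset card (mset_set (orbit f ` A))"

lemma cycle_partition_eq_cycle_lengths: "cycle_partition n g = cycle_lengths g {1..n}"
  unfolding cycle_partition_def cycle_lengths_def by (simp only: Setcompr_eq_image)

lemma cycle_lengths_eq_empty_iff:
  assumes "finite A"
  shows "cycle_lengths f A = {#} \<longleftrightarrow> A = {}"
  using assms by (simp add: cycle_lengths_def mset_set_empty_iff)

lemma is_partition_cycle_lengths:
  assumes "f ^^ N = id" "0 < N" "f ` A \<subseteq> A" "finite A"
  shows "is_partition (cycle_lengths f A) (card A)"
  unfolding is_partition_def
proof
  show "0 \<notin># cycle_lengths f A"
  proof
    assume "0 \<in># cycle_lengths f A"
    then obtain x where "card (orbit f x) = 0"
      using assms(4) by (auto simp: cycle_lengths_def)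
    moreover have "finite (orbit f x)"
      using finite_orbit[OF self_in_orbit_of_funpow_eq_id[OF assms(1,2)]] .
    ultimately show False
      using orbit_nonempty[of f x] by simp
  qed
  show "sum_mset (cycle_lengths f A) = card A"
    using sum_card_orbits[OF assms] by (simp add: cycle_lengths_def sum_unfold_sum_mset)
qed

lemma cycle_lengths_UN:
  assumes "f ^^ N = id" "0 < N" "finite I"
    and "\<And>i. i \<in> I \<Longrightarrow> finite (A i)" "\<And>i. i \<in> I \<Longrightarrow> f ` A i \<subseteq> A i"
    and "disjoint_family_on A I"
  shows "cycle_lengths f (\<Union>i\<in>I. A i) = (\<Sum>i\<in>I. cycle_lengths f (A i))"
  using assms(3-6)
proof (induction I rule: finite_induct)
  case (insert i I)
  have "orbit f ` A i \<inter> orbit f ` (\<Union>j\<in>I. A j) = {}"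
  proof (rule ccontr)
    assume "\<not> ?thesis"
    then obtain x y j where "x \<in> A i" "j \<in> I" "y \<in> A j" "orbit f x = orbit f y"
      by blast
    moreover have "orbit f y \<subseteq> A j"
      using orbit_subset_of_image_subset[OF insert.prems(2)] calculation by blast
    ultimately have "x \<in> A i \<inter> A j"
      using self_in_orbit_of_funpow_eq_id[OF assms(1,2)] by blast
    moreover have "i \<noteq> j"
      using insert.hyps(2) \<open>j \<in> I\<close> by blast
    ultimately show False
      using insert.prems(3) \<open>j \<in> I\<close> unfolding disjoint_family_on_def by blast
  qed
  moreover have "finite (orbit f ` A i)" "finite (orbit f ` (\<Union>j\<in>I. A j))"
    using insert.hyps(1) insert.prems(1) by auto
  ultimately have "cycle_lengths f (\<Union>j\<in>insert i I. A j)
      = cycle_lengths f (A i) + cycle_lengths f (\<Union>j\<in>I. A j)"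
    by (simp add: cycle_lengths_def image_Un mset_set_Union)
  also have "cycle_lengths f (\<Union>j\<in>I. A j) = (\<Sum>j\<in>I. cycle_lengths f (A j))"
    using insert.prems disjoint_family_on_mono[OF subset_insertI]
    by (intro insert.IH) auto
  finally show ?case
    using insert.hyps by simp
qed (simp add: cycle_lengths_def)

lemma ic_partitionI:
  assumes "is_partition P (k * m)" "0 < k" "\<forall>x\<in>#P. k dvd x"
  shows "ic_partition P k m"
  unfolding ic_partition_def
proof (intro exI conjI)
  let ?Q = "image_mset (\<lambda>x. x div k) P"
  have "image_mset ((*) k) ?Q = image_mset (\<lambda>x. x) P"
    unfolding image_mset.compositionality by (rule image_mset_cong) (use assms(3) in simp)
  then show P_eq: "P = image_mset ((*) k) ?Q"
    by simp
  have "k * sum_mset M = sum_mset (image_mset ((*) k) M)" for M :: "nat multiset"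
    by (induction M) (simp_all add: distrib_left)
  then have "k * sum_mset ?Q = k * m"
    using assms(1) P_eq[symmetric] by (simp add: is_partition_def)
  moreover have "0 \<notin># ?Q"
  proof
    assume "0 \<in># ?Q"
    then obtain x where "x \<in># P" "x div k = 0"
      by auto
    then have "0 \<in># P"
      using assms(3) dvd_div_eq_0_iff by metis
    then show False
      using assms(1) by (simp add: is_partition_def)
  qed
  ultimately show "is_partition ?Q m"
    using assms(2) by (simp add: is_partition_def)
qed

lemma image_Union_orbit_image: "f ` \<Union>(orbit ((`) f) X) \<subseteq> \<Union>(orbit ((`) f) X)"
  by (blast intro: orbit.step)

locale block_system =
  fixes g :: "'a \<Rightarrow> 'a" and Bs :: "'a set set" and m :: nat
  assumes permutation: "permutation g"
    and finite_blocks: "finite Bs"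
    and card_block: "X \<in> Bs \<Longrightarrow> card X = m"
    and block_size_pos: "0 < m"
    and blocks_disjoint: "X \<in> Bs \<Longrightarrow> Y \<in> Bs \<Longrightarrow> X \<inter> Y \<noteq> {} \<Longrightarrow> X = Y"
    and image_block: "X \<in> Bs \<Longrightarrow> g ` X \<in> Bs"
begin

lemma funpow_eq_id:
  obtains N where "0 < N" "g ^^ N = id" "(`) g ^^ N = id"
proof -
  obtain N where "g ^^ N = id" "0 < N"
    by (rule permutation_is_nilpotent[OF permutation])
  moreover have "(`) g ^^ N = id"
    using calculation(1) by (simp add: fun_eq_iff funpow_image)
  ultimately show thesis
    using that by blast
qed

lemma finite_block: "X \<in> Bs \<Longrightarrow> finite X"
  using card_block block_size_pos card_ge_0_finite by auto

lemma image_blocks_subset: "(`) g ` Bs \<subseteq> Bs"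
  using image_block by blast

lemma block_orbit_subset: "X \<in> Bs \<Longrightarrow> orbit ((`) g) X \<subseteq> Bs"
  by (rule orbit_subset_of_image_subset[OF image_blocks_subset])

lemma card_Union_blocks:
  assumes "Cs \<subseteq> Bs"
  shows "card (\<Union>Cs) = card Cs * m"
proof -
  have "pairwise disjnt Cs"
    using blocks_disjoint assms unfolding pairwise_def disjnt_def by blast
  then have "card (\<Union>Cs) = (\<Sum>X\<in>Cs. card X)"
    using finite_block assms by (intro card_Union_disjoint) auto
  also have "\<dots> = (\<Sum>X\<in>Cs. m)"
    using card_block assms by (intro sum.cong) auto
  finally show ?thesis
    by simp
qed

lemma card_block_orbit_dvd_card_orbit:
  assumes "X \<in> Bs" "x \<in> \<Union>(orbit ((`) g) X)"
  shows "card (orbit ((`) g) X) dvd card (orbit g x)"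
proof -
  obtain N where N: "0 < N" "g ^^ N = id" "(`) g ^^ N = id"
    by (rule funpow_eq_id)
  from assms(2) obtain Y where Y: "Y \<in> orbit ((`) g) X" "x \<in> Y"
    by blast
  have "Y \<in> Bs"
    using block_orbit_subset[OF assms(1)] Y(1) by blast
  define q where "q = card (orbit g x)"
  have x: "x \<in> orbit g x"
    by (rule self_in_orbit_of_funpow_eq_id[OF N(2,1)])
  have "0 < q"
    using finite_orbit[OF x] orbit_nonempty[of g x] by (simp add: q_def card_gt_0_iff)
  have "x \<in> ((`) g ^^ q) Y"
    using funpow_card_orbit[OF x] Y(2) unfolding funpow_image q_def by (metis imageI)
  moreover have "((`) g ^^ q) Y \<in> Bs"
    using funpow_in_orbit[OF Y(1)] block_orbit_subset[OF assms(1)] by blast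
  ultimately have "((`) g ^^ q) Y = Y"
    using blocks_disjoint \<open>Y \<in> Bs\<close> Y(2) by blast
  then have "card (orbit ((`) g) Y) dvd q"
    using card_orbit_dvd[OF self_in_orbit_of_funpow_eq_id[OF N(3,1)] _ \<open>0 < q\<close>] by blast
  moreover have "orbit ((`) g) Y = orbit ((`) g) X"
    by (rule orbit_eq_of_funpow_eq_id[OF N(3,1) Y(1)])
  ultimately show ?thesis
    by (simp add: q_def)
qed

lemma finite_Union_block_orbit: "X \<in> Bs \<Longrightarrow> finite (\<Union>(orbit ((`) g) X))"
  using block_orbit_subset finite_blocks finite_block by (meson finite_Union finite_subset subsetD)

lemma ic_partition_block_orbit:
  assumes "X \<in> Bs"
  shows "ic_partition (cycle_lengths g (\<Union>(orbit ((`) g) X))) (card (orbit ((`) g) X)) m"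
proof (rule ic_partitionI)
  obtain N where N: "0 < N" "g ^^ N = id" "(`) g ^^ N = id"
    by (rule funpow_eq_id)
  let ?O = "orbit ((`) g) X"
  show "is_partition (cycle_lengths g (\<Union>?O)) (card ?O * m)"
    using is_partition_cycle_lengths[OF N(2,1) image_Union_orbit_image finite_Union_block_orbit[OF assms]]
      card_Union_blocks[OF block_orbit_subset[OF assms]] by simp
  show "0 < card ?O"
    using self_in_orbit_of_funpow_eq_id[OF N(3,1)] finite_subset[OF block_orbit_subset[OF assms] finite_blocks]
    by (auto simp: card_gt_0_iff)
  show "\<forall>c\<in>#cycle_lengths g (\<Union>?O). card ?O dvd c"
    using card_block_orbit_dvd_card_orbit[OF assms] finite_Union_block_orbit[OF assms]
    by (auto simp: cycle_lengths_def)
qed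

lemma disjoint_family_Union_block_orbits: "disjoint_family_on Union (orbit ((`) g) ` Bs)"
proof -
  obtain N where N: "0 < N" "g ^^ N = id" "(`) g ^^ N = id"
    by (rule funpow_eq_id)
  show ?thesis
    unfolding disjoint_family_on_def
  proof (intro ballI impI)
    fix O1 O2 assume O: "O1 \<in> orbit ((`) g) ` Bs" "O2 \<in> orbit ((`) g) ` Bs" "O1 \<noteq> O2"
    then have "O1 \<inter> O2 = {}"
      using pairwise_disjnt_orbits[OF N(3,1)] unfolding pairwise_def disjnt_def by blast
    moreover have "O1 \<subseteq> Bs" "O2 \<subseteq> Bs"
      using O(1,2) block_orbit_subset by auto
    ultimately show "\<Union>O1 \<inter> \<Union>O2 = {}"
      using blocks_disjoint by blast
  qed
qed

lemma cycle_lengths_Union_blocks: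
  "cycle_lengths g (\<Union>Bs) = (\<Sum>Ob\<in>orbit ((`) g) ` Bs. cycle_lengths g (\<Union>Ob))"
proof -
  obtain N where N: "0 < N" "g ^^ N = id" "(`) g ^^ N = id"
    by (rule funpow_eq_id)
  have "\<Union>Bs = (\<Union>Ob\<in>orbit ((`) g) ` Bs. \<Union>Ob)"
    using Union_orbits[OF N(3,1) image_blocks_subset] by blast
  also have "cycle_lengths g \<dots> = (\<Sum>Ob\<in>orbit ((`) g) ` Bs. cycle_lengths g (\<Union>Ob))"
    using finite_blocks finite_Union_block_orbit image_Union_orbit_image[of g]
      disjoint_family_Union_block_orbits
    by (intro cycle_lengths_UN[OF N(2,1)]) blast+
  finally show ?thesis .
qed

lemma i_partition_cycle_lengths: "i_partition (cycle_lengths g (\<Union>Bs)) (card Bs) m"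
  unfolding i_partition_def
proof (intro conjI exI)
  obtain N where N: "0 < N" "g ^^ N = id" "(`) g ^^ N = id"
    by (rule funpow_eq_id)
  let ?BO = "orbit ((`) g) ` Bs"
  let ?C = "image_mset (\<lambda>Ob. (card Ob, cycle_lengths g (\<Union>Ob))) (mset_set ?BO)"
  have Union_blocks: "g ` \<Union>Bs \<subseteq> \<Union>Bs" "finite (\<Union>Bs)"
    using image_block finite_blocks finite_block by auto
  show "is_partition (cycle_lengths g (\<Union>Bs)) (card Bs * m)"
    using is_partition_cycle_lengths[OF N(2,1) Union_blocks] card_Union_blocks[of Bs] by simp
  show "\<forall>c\<in>#?C. snd c \<noteq> {#}"
  proof
    fix c assume "c \<in># ?C"
    then obtain X where "X \<in> Bs" "c = (card (orbit ((`) g) X), cycle_lengths g (\<Union>(orbit ((`) g) X)))"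
      using finite_blocks by auto
    moreover have "X \<noteq> {}" "X \<in> orbit ((`) g) X"
      using card_block[OF \<open>X \<in> Bs\<close>] block_size_pos self_in_orbit_of_funpow_eq_id[OF N(3,1)] by auto
    ultimately show "snd c \<noteq> {#}"
      using cycle_lengths_eq_empty_iff finite_Union_block_orbit by auto
  qed
  have "sum_mset (image_mset snd ?C) = (\<Sum>Ob\<in>?BO. cycle_lengths g (\<Union>Ob))"
    by (simp add: image_mset.compositionality comp_def sum_unfold_sum_mset)
  then show "sum_mset (image_mset snd ?C) = cycle_lengths g (\<Union>Bs)"
    by (simp add: cycle_lengths_Union_blocks)
  have "image_mset fst ?C = cycle_lengths ((`) g) Bs"
    by (simp add: cycle_lengths_def image_mset.compositionality comp_def)
  then show "is_partition (image_mset fst ?C) (card Bs)"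
    using is_partition_cycle_lengths[OF N(3,1) image_blocks_subset finite_blocks] by simp
  show "\<forall>c\<in>#?C. ic_partition (snd c) (fst c) m"
    using ic_partition_block_orbit finite_blocks by auto
qed

end

lemma subgroup_sym_group_permutes:
  assumes "subgroup G (sym_group n)" "h \<in> G"
  shows "h permutes {1..n}"
  using subgroup.subset[OF assms(1)] assms(2) sym_group_carrier by blast

lemma block_translates_disjoint:
  assumes G: "subgroup G (sym_group n)" and B: "is_block n G B"
    and h: "h1 \<in> G" "h2 \<in> G" and "h1 ` B \<inter> h2 ` B \<noteq> {}"
  shows "h1 ` B = h2 ` B"
proof -
  obtain a b where ab: "a \<in> B" "b \<in> B" "h1 a = h2 b"
    using assms(5) by blast
  let ?u = "inv' h1 \<circ> h2"
  have "h1 \<in> carrier (sym_group n)"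
    using subgroup.subset[OF G] h(1) by blast
  then have "?u \<in> G"
    using subgroup.m_closed[OF G subgroup.m_inv_closed[OF G h(1)] h(2)] by (simp add: sym_group_mult)
  moreover have "?u b = a"
    using ab(3) permutes_inverses(2)[OF subgroup_sym_group_permutes[OF G h(1)]] by (metis comp_apply)
  ultimately have "?u ` B = B"
    using B ab(1,2) unfolding is_block_def by blast
  then have "h1 ` (?u ` B) = h1 ` B"
    by simp
  then show ?thesis
    using permutes_inverses(1)[OF subgroup_sym_group_permutes[OF G h(1)]]
    by (simp add: image_comp comp_assoc)
qed

lemma block_system_translates:
  assumes G: "subgroup G (sym_group n)" and B: "is_block n G B" and "g \<in> G"
  shows "block_system g ((\<lambda>h. h ` B) ` G) (card B)"
proof -
  note perm = subgroup_sym_group_permutes[OF G]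
  have B_sub: "B \<subseteq> {1..n}" and B_ne: "B \<noteq> {}"
    using B by (auto simp: is_block_def)
  show ?thesis
  proof unfold_locales
    show "permutation g"
      using perm[OF \<open>g \<in> G\<close>] permutation_permutes by blast
    have "(\<lambda>h. h ` B) ` G \<subseteq> Pow {1..n}"
      using perm B_sub permutes_image by fastforce
    then show "finite ((\<lambda>h. h ` B) ` G)"
      by (rule finite_subset) simp
    show "card X = card B" if "X \<in> (\<lambda>h. h ` B) ` G" for X
      using that perm by (auto intro!: card_image inj_on_subset[OF permutes_inj])
    show "0 < card B"
      using B_sub B_ne finite_subset card_gt_0_iff by blast
    show "X = Y" if "X \<in> (\<lambda>h. h ` B) ` G" "Y \<in> (\<lambda>h. h ` B) ` G" "X \<inter> Y \<noteq> {}"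
      for X Y
      using that block_translates_disjoint[OF G B] by blast
    show "g ` X \<in> (\<lambda>h. h ` B) ` G" if X: "X \<in> (\<lambda>h. h ` B) ` G" for X
    proof -
      obtain h where "h \<in> G" "X = h ` B"
        using X by blast
      moreover have "g \<circ> h \<in> G"
        using subgroup.m_closed[OF G \<open>g \<in> G\<close> \<open>h \<in> G\<close>] by (simp add: sym_group_mult)
      ultimately show ?thesis
        by (metis image_comp image_eqI)
    qed
  qed
qed

lemma Union_translates:
  assumes "subgroup G (sym_group n)" "transitive_perm_group n G" "is_block n G B"
  shows "\<Union>((\<lambda>h. h ` B) ` G) = {1..n}"
proof
  show "\<Union>((\<lambda>h. h ` B) ` G) \<subseteq> {1..n}"
  proof clarify
    fix h x assume "h \<in> G" "x \<in> B"
    then have "h permutes {1..n}" "x \<in> {1..n}"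
      using subgroup_sym_group_permutes[OF assms(1)] assms(3) unfolding is_block_def by blast+
    then show "h x \<in> {1..n}"
      by (rule iffD2[OF permutes_in_image])
  qed
  show "{1..n} \<subseteq> \<Union>((\<lambda>h. h ` B) ` G)"
  proof
    fix y assume "y \<in> {1..n}"
    have "B \<noteq> {}" "B \<subseteq> {1..n}"
      using assms(3) unfolding is_block_def by blast+
    then obtain x where "x \<in> B" "x \<in> {1..n}"
      by blast
    moreover obtain h where "h \<in> G" "h x = y"
      using assms(2) \<open>y \<in> {1..n}\<close> \<open>x \<in> {1..n}\<close> unfolding transitive_perm_group_def by blast
    ultimately show "y \<in> \<Union>((\<lambda>h. h ` B) ` G)"
      by blast
  qed
qed

lemma i_type_of_nontrivial_block:
  assumes G: "subgroup G (sym_group n)" "transitive_perm_group n G"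
    and B: "is_block n G B" "1 < card B" "card B < n"
    and "g \<in> G"
  shows "(card ((\<lambda>h. h ` B) ` G), card B) \<in> i_type n g"
proof -
  let ?Bs = "(\<lambda>h. h ` B) ` G"
  interpret block_system g ?Bs "card B"
    by (rule block_system_translates[OF G(1) B(1) \<open>g \<in> G\<close>])
  have n: "n = card ?Bs * card B"
    using card_Union_blocks[of ?Bs] Union_translates[OF G B(1)] by simp
  have "1 < card ?Bs"
  proof (rule ccontr)
    assume "\<not> 1 < card ?Bs"
    then have "card ?Bs * card B \<le> 1 * card B"
      by (intro mult_right_mono) auto
    then show False
      using n B(3) by simp
  qed
  moreover have "i_partition (cycle_partition n g) (card ?Bs) (card B)"
    using i_partition_cycle_lengths Union_translates[OF G B(1)]
    by (simp add: cycle_partition_eq_cycle_lengths)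
  ultimately show ?thesis
    using B(2) n by (simp add: i_type_def)
qed

theorem mainTheorem18:
  fixes n :: nat and G :: "(nat \<Rightarrow> nat) set" and g1 g2 :: "nat \<Rightarrow> nat"
  assumes "subgroup G (sym_group n)"
    and "transitive_perm_group n G"
    and "g1 \<in> G" and "g2 \<in> G"
    and "i_type n g1 \<inter> i_type n g2 = {}"
  shows "primitive_perm_group n G"
proof -
  have "card B = 1 \<or> B = {1..n}" if B: "is_block n G B" for B
  proof (rule ccontr)
    assume nontrivial: "\<not> (card B = 1 \<or> B = {1..n})"
    have B_sub: "B \<subseteq> {1..n}" and "B \<noteq> {}"
      using B by (auto simp: is_block_def)
    then have "1 < card B"
      using nontrivial finite_subset[OF B_sub] by (metis card_0_eq finite_atLeastAtMost less_one nat_neq_iff)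
    moreover have "card B < n"
      using psubset_card_mono[of "{1..n}" B] B_sub nontrivial by auto
    ultimately show False
      using i_type_of_nontrivial_block[OF assms(1,2) B] assms(3-5) by blast
  qed
  then show ?thesis
    using assms(2) by (simp add: primitive_perm_group_def)
qed

end
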